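(* Let $\tau\in(0,1)$, let $\mathcal Y\subseteq\mathbb R$ be an interval, a half-line or $\mathbb R$, and let $\mathcal F$ be a class of distributions supported on $\mathcal Y$, all with finite first moment. Let $\Phi:\mathcal Y^2\to\mathbb R$ be convex (respectively strictly convex) with sub-gradient $\nabla\Phi=(\partial_1\Phi,\partial_2\Phi)$, and let $g:\mathcal Y\to\mathbb R$ be such that for every $(e^-,e^+)\in\mathcal Y^2$ the function \[ G_{e^-,e^+}:\mathcal Y\to\mathbb R,\qquad v\mapsto g(v)+\tfrac1\tau\partial_1\Phi(e^-,e^+)\,v-\tfrac{1}{1-\tau}\partial_2\Phi(e^-,e^+)\,v \] is increasing (respectively strictly increasing). Assume $\mathbb E_F[|g(Y)|]<\infty$ and $\mathbb E_F[|\Phi(Y,Y)|]<\infty$ for all $Y\sim F\in\mathcal F$. Define $L:\mathcal Y\times\mathcal Y^3\to\mathbb R$ by \[ L(y;e^-,v,e^+)=\big(g(y)-g(v)\big)\big(\tau-\mathds 1_{\{y\le v\}}\big)+\left\langle\nabla\Phi(e^-,e^+),\begin{pmatrix} e^-+\tfrac1\tau S^-_\tau(y;v)\\ e^+-\tfrac{1}{1-\tau}S^+_\tau(y;v)\end{pmatrix}\right\rangle-\Phi(e^-,e^+)+\Phi(y,y). \] Then $L$ is $\mathcal F$-consistent (respectively strictly $\mathcal F$-consistent) for the composite triplet $(\mathrm{ES}^-_\tau,q_\tau,\mathrm{ES}^+_\tau)$. Moreover, $L(y;e^-,v,e^+)\ge L(y;y,y,y)=0$ for all $y\in\mathcal Y$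 and $(e^-,v,e^+)\in\mathcal Y^3$.
   Context: For $y,a\in\mathbb R$: $S^-_\tau(y;a) = (\mathds{1}_{\{y\le a\}} - \tau)a - \mathds{1}_{\{y\le a\}}y$ and $S^+_\tau(y;a) = (1-\tau - \mathds{1}_{\{y > a\}})a + \mathds{1}_{\{y> a\}}y$. For a distribution function $F$, $F^{-1}(p)=\inf\{y: F(y)\ge p\}$, the set-valued $\tau$-quantile is $q_\tau(F)=\{t\in\mathbb R: F(t-)\le\tau\le F(t)\}$, and the lower and upper expected shortfalls are $\mathrm{ES}^-_\tau(F)=\frac1\tau\int_0^\tau F^{-1}(p)\,dp$ and $\mathrm{ES}^+_\tau(F)=\frac1{1-\tau}\int_\tau^1F^{-1}(p)\,dp$. The composite triplet is the set-valued functional $F\mapsto\{(\mathrm{ES}^-_\tau(F),v,\mathrm{ES}^+_\tau(F)): v\in q_\tau(F)\}$. A scoring function $L:\mathcal Y\times\mathcal A\to\mathbb R$ is $\mathcal F$-consistent for a functional $A:\mathcal F\to\mathcal P(\mathcal A)$ if $\mathbb E_F[|L(Y;a)|]<\infty$ for all $Y\sim F\in\mathcal F$ and $a\in\mathcal A$, and $\mathbb E_F[L(Y;\hat a)]\le\mathbb E_F[L(Y;a)]$ for all $F\in\mathcal F$, $\hat a\in A(F)$, $a\in\mathcal A$; it is strictly $\mathcal F$-consistent if moreover equality implies $a\in A(F)$. *)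

theory Defs
  imports "HOL-Probability.Probability"
begin

definition S_minus :: "real \<Rightarrow> real \<Rightarrow> real \<Rightarrow> real" where
  "S_minus \<tau> y a = ((if y \<le> a then 1 else 0) - \<tau>) * a - (if y \<le> a then 1 else 0) * y"

definition S_plus :: "real \<Rightarrow> real \<Rightarrow> real \<Rightarrow> real" where
  "S_plus \<tau> y a = (1 - \<tau> - (if y > a then 1 else 0)) * a + (if y > a then 1 else 0) * y"

definition quantile_fun :: "real measure \<Rightarrow> real \<Rightarrow> real" where
  "quantile_fun M p = Inf {y. cdf M y \<ge> p}"

definition quantile_set :: "real \<Rightarrow> real measure \<Rightarrow> real set" where
  "quantile_set \<tau> M = {t. measure M {..<t} \<le> \<tau> \<and> \<tau> \<le> cdf M t}"

definition ES_lower :: "real \<Rightarrow> real measure \<Rightarrow> real" where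
  "ES_lower \<tau> M = (1 / \<tau>) * (LINT p:{0<..<\<tau>}|lborel. quantile_fun M p)"

definition ES_upper :: "real \<Rightarrow> real measure \<Rightarrow> real" where
  "ES_upper \<tau> M = (1 / (1 - \<tau>)) * (LINT p:{\<tau><..<1}|lborel. quantile_fun M p)"

definition composite_triplet :: "real \<Rightarrow> real measure \<Rightarrow> (real \<times> real \<times> real) set" where
  "composite_triplet \<tau> M = {(ES_lower \<tau> M, v, ES_upper \<tau> M) | v. v \<in> quantile_set \<tau> M}"

definition consistent ::
  "real measure set \<Rightarrow> 'a set \<Rightarrow> (real \<Rightarrow> 'a \<Rightarrow> real) \<Rightarrow> (real measure \<Rightarrow> 'a set) \<Rightarrow> bool" where
  "consistent Fs A L T \<longleftrightarrow>
     (\<forall>M\<in>Fs. \<forall>a\<in>A. integrable M (\<lambda>y. L y a)) \<and>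
     (\<forall>M\<in>Fs. \<forall>ah\<in>T M. \<forall>a\<in>A. (\<integral>y. L y ah \<partial>M) \<le> (\<integral>y. L y a \<partial>M))"

definition strictly_consistent ::
  "real measure set \<Rightarrow> 'a set \<Rightarrow> (real \<Rightarrow> 'a \<Rightarrow> real) \<Rightarrow> (real measure \<Rightarrow> 'a set) \<Rightarrow> bool" where
  "strictly_consistent Fs A L T \<longleftrightarrow> consistent Fs A L T \<and>
     (\<forall>M\<in>Fs. \<forall>ah\<in>T M. \<forall>a\<in>A. (\<integral>y. L y ah \<partial>M) = (\<integral>y. L y a \<partial>M) \<longrightarrow> a \<in> T M)"

definition strict_convex_on :: "'a::real_vector set \<Rightarrow> ('a \<Rightarrow> real) \<Rightarrow> bool" where
  "strict_convex_on S f \<longleftrightarrow> convex S \<and>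
    (\<forall>x\<in>S. \<forall>y\<in>S. x \<noteq> y \<longrightarrow> (\<forall>u. 0 < u \<and> u < 1 \<longrightarrow>
        f ((1 - u) *\<^sub>R x + u *\<^sub>R y) < (1 - u) * f x + u * f y))"

definition is_subgradient_on :: "'a::real_inner set \<Rightarrow> ('a \<Rightarrow> real) \<Rightarrow> ('a \<Rightarrow> 'a) \<Rightarrow> bool" where
  "is_subgradient_on S f df \<longleftrightarrow> (\<forall>x\<in>S. \<forall>z\<in>S. f z \<ge> f x + df x \<bullet> (z - x))"

definition G_fun :: "real \<Rightarrow> (real \<Rightarrow> real) \<Rightarrow> (real \<times> real \<Rightarrow> real \<times> real) \<Rightarrow> real \<times> real \<Rightarrow> real \<Rightarrow> real" where
  "G_fun \<tau> g d\<Phi> e v = g v + (1 / \<tau>) * fst (d\<Phi> e) * v - (1 / (1 - \<tau>)) * snd (d\<Phi> e) * v"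

definition score_L ::
  "real \<Rightarrow> (real \<Rightarrow> real) \<Rightarrow> (real \<times> real \<Rightarrow> real) \<Rightarrow> (real \<times> real \<Rightarrow> real \<times> real)
     \<Rightarrow> real \<Rightarrow> real \<times> real \<times> real \<Rightarrow> real" where
  "score_L \<tau> g \<Phi> d\<Phi> y a = (case a of (em, v, ep) \<Rightarrow>
      (g y - g v) * (\<tau> - (if y \<le> v then 1 else 0))
      + d\<Phi> (em, ep) \<bullet> (em + (1 / \<tau>) * S_minus \<tau> y v, ep - (1 / (1 - \<tau>)) * S_plus \<tau> y v)
      - \<Phi> (em, ep) + \<Phi> (y, y))"

end

(*
  The score splits pointwise as
    L(y; e-, v, e+) = S_G(v, y) + D((e-, e+), (y, y)),
  where S_G(v, y) = (tau - 1{y <= v}) (G(y) - G(v)) is the generalised piecewise linear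
  score of G = G_{e-,e+} and D is the Bregman divergence of Phi along its sub-gradient.
  Via the quantile transform Y = F^-1(U), for every tau-quantile q one has
  tau (ES- - q) = E[1{Y <= q} (Y - q)] and (1 - tau) (ES+ - q) = E[1{Y > q} (Y - q)];
  these identities make the linear part of G cancel against the Bregman term in expectation, so
    E L(e-, v, e+) = E L(ES-, q, ES+) + (E S_G(v, Y) - E S_G(q, Y)) + D((e-, e+), (ES-, ES+)).
  The middle term is nonnegative because quantiles minimise the expected score of an
  increasing G, and vanishes only at quantiles if G is strictly increasing; the last term is
  nonnegative by the sub-gradient inequality and vanishes only at (ES-, ES+) if Phi is
  strictly convex.
*)

theory Submission
  imports Defs
begin

lemma is_interval_not_mem_cases:
  fixes Y :: "real set"
  assumes "is_interval Y" "m \<notin> Y"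
  shows "(\<forall>y\<in>Y. y < m) \<or> (\<forall>y\<in>Y. m < y)"
  by (meson assms is_interval_1 linorder_not_less)

lemma null_sets_of_integral_nonneg_eq_0:
  fixes h :: "'a \<Rightarrow> real"
  assumes "integrable M h" "AE x in M. 0 \<le> h x" "integral\<^sup>L M h = 0"
    and "B \<in> sets M" "AE x in M. x \<in> B \<longrightarrow> 0 < h x"
  shows "B \<in> null_sets M"
proof -
  have "AE x in M. h x = 0"
    using integral_nonneg_eq_0_iff_AE[OF assms(1,2)] assms(3) by simp
  then have "AE x in M. x \<notin> B"
    using assms(5) by eventually_elim auto
  then show ?thesis
    using AE_iff_null_sets[OF assms(4)] by simp
qed

lemma set_integral_average_mem_interval:
  fixes h :: "'a \<Rightarrow> real"
  assumes Y: "is_interval Y" and B: "B \<in> sets N" "0 < measure N B"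
    and h: "set_integrable N B h" and hY: "AE x in N. x \<in> B \<longrightarrow> h x \<in> Y"
  shows "(LINT x:B|N. h x) / measure N B \<in> Y"
proof (rule ccontr)
  define m where "m = (LINT x:B|N. h x) / measure N B"
  assume "m \<notin> Y"
  have "emeasure N B < \<infinity>"
    using B(2) by (metis infinity_ennreal_def less_top measure_zero_top not_less_iff_gr_or_eq)
  then have ind: "integrable N (indicator B :: 'a \<Rightarrow> real)"
    using B(1) by (simp add: integrable_indicator_iff)
  \<comment> \<open>\<open>s = 1\<close> and \<open>s = -1\<close> treat the two sides of \<open>Y\<close> at once.\<close>
  have separated: False if sY: "\<forall>y\<in>Y. s * y < s * m" for s :: real
  proof -
    define f where "f x = s * m * indicator B x - s * (indicator B x * h x)" for x
    have f_int: "integrable N f"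
      unfolding f_def using ind h by (auto simp: set_integrable_def)
    have "integral\<^sup>L N f = s * m * measure N B - s * (LINT x:B|N. h x)"
      unfolding f_def using ind h B(1)
      by (simp add: set_integrable_def set_lebesgue_integral_def sets.Int_space_eq2)
    also have "\<dots> = 0"
      using B(2) by (simp add: m_def)
    finally have "integral\<^sup>L N f = 0" .
    have pos: "AE x in N. x \<in> B \<longrightarrow> 0 < f x"
      using hY by eventually_elim (use sY in \<open>auto simp: f_def\<close>)
    then have "AE x in N. 0 \<le> f x"
      by eventually_elim (auto simp: f_def indicator_def)
    then have "B \<in> null_sets N"
      using null_sets_of_integral_nonneg_eq_0[OF f_int _ \<open>integral\<^sup>L N f = 0\<close> B(1) pos] by simp
    then show False
      using B(2) by (simp add: measure_def null_setsD1)
  qed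
  from is_interval_not_mem_cases[OF Y \<open>m \<notin> Y\<close>] show False
    using separated[of 1] separated[of "-1"] by auto
qed

section \<open>Bregman divergences\<close>

definition bregman_div :: "('a::real_inner \<Rightarrow> real) \<Rightarrow> ('a \<Rightarrow> 'a) \<Rightarrow> 'a \<Rightarrow> 'a \<Rightarrow> real" where
  "bregman_div f df x z = f z - f x - df x \<bullet> (z - x)"

lemma bregman_div_same [simp]: "bregman_div f df x x = 0"
  by (simp add: bregman_div_def)

lemma bregman_div_nonneg:
  assumes "is_subgradient_on S f df" "x \<in> S" "z \<in> S"
  shows "0 \<le> bregman_div f df x z"
proof -
  have "f x + df x \<bullet> (z - x) \<le> f z"
    using assms unfolding is_subgradient_on_def by blast
  then show ?thesis
    by (simp add: bregman_div_def)
qed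

lemma bregman_div_eq_0_imp_eq:
  assumes sc: "strict_convex_on S f" and sg: "is_subgradient_on S f df"
    and x: "x \<in> S" and z: "z \<in> S" and eq: "bregman_div f df x z = 0"
  shows "z = x"
proof (rule ccontr)
  assume "z \<noteq> x"
  define m where "m = (1 - 1/2) *\<^sub>R x + (1/2::real) *\<^sub>R z"
  have "m \<in> S"
    using sc x z by (simp add: m_def strict_convex_on_def convexD)
  have strict: "\<forall>u. 0 < u \<and> u < 1 \<longrightarrow> f ((1 - u) *\<^sub>R x + u *\<^sub>R z) < (1 - u) * f x + u * f z"
    using sc x z \<open>z \<noteq> x\<close> unfolding strict_convex_on_def by (metis (full_types))
  have "f m < (1 - 1/2) * f x + (1/2) * f z"
    using strict[rule_format, of "1/2"] unfolding m_def by simp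
  moreover have "m - x = (1/2::real) *\<^sub>R (z - x)"
    by (simp add: m_def algebra_simps flip: scaleR_add_left)
  then have "bregman_div f df x m = f m - f x - (1/2) * (df x \<bullet> (z - x))"
    by (simp add: bregman_div_def)
  ultimately have "bregman_div f df x m < 0"
    using eq by (simp add: bregman_div_def algebra_simps)
  then show False
    using bregman_div_nonneg[OF sg x \<open>m \<in> S\<close>] by simp
qed

section \<open>The score as a generalised piecewise linear score plus a Bregman divergence\<close>

definition gpl_score :: "real \<Rightarrow> (real \<Rightarrow> real) \<Rightarrow> real \<Rightarrow> real \<Rightarrow> real" where
  "gpl_score \<tau> G v y = (\<tau> - indicator {..v} y) * (G y - G v)"

lemma gpl_score_nonneg:
  assumes "0 \<le> \<tau>" "\<tau> \<le> 1" "mono_on Y G" "y \<in> Y" "v \<in> Y"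
  shows "0 \<le> gpl_score \<tau> G v y"
proof (cases "y \<le> v")
  case True
  then show ?thesis
    using assms mono_onD[of Y G y v] by (simp add: gpl_score_def mult_nonpos_nonpos)
next
  case False
  then show ?thesis
    using assms mono_onD[of Y G v y] by (simp add: gpl_score_def)
qed

lemma gpl_score_add_linear:
  "gpl_score \<tau> (\<lambda>y. G y + c * y) v y = gpl_score \<tau> G v y + c * gpl_score \<tau> (\<lambda>y. y) v y"
  by (simp add: gpl_score_def algebra_simps)

lemma G_fun_eq: "G_fun \<tau> g d\<Phi> e = (\<lambda>y. g y + (fst (d\<Phi> e) / \<tau> - snd (d\<Phi> e) / (1 - \<tau>)) * y)"
  by (simp add: G_fun_def fun_eq_iff algebra_simps)

lemma integrable_G_fun:
  assumes "integrable M g" "integrable M (\<lambda>y. y)"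
  shows "integrable M (G_fun \<tau> g d\<Phi> e)"
  unfolding G_fun_eq using assms by simp

lemma score_L_eq_gpl_score_bregman_div:
  assumes "\<tau> \<noteq> 0" "\<tau> \<noteq> 1"
  shows "score_L \<tau> g \<Phi> d\<Phi> y (em, v, ep) =
    gpl_score \<tau> (G_fun \<tau> g d\<Phi> (em, ep)) v y + bregman_div \<Phi> d\<Phi> (em, ep) (y, y)"
proof -
  obtain d1 d2 where d: "d\<Phi> (em, ep) = (d1, d2)" by fastforce
  define I :: real where "I = (if y \<le> v then 1 else 0)"
  have I: "(if v < y then 1 else 0 :: real) = 1 - I" "indicator {..v} y = I"
    by (auto simp: I_def)
  define a b where "a = 1 / \<tau>" and "b = 1 / (1 - \<tau>)"
  have "a * \<tau> = 1" "b * (1 - \<tau>) = 1"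
    using assms by (simp_all add: a_def b_def)
  have "score_L \<tau> g \<Phi> d\<Phi> y (em, v, ep) = (g y - g v) * (\<tau> - I)
      + d1 * (em + a * ((I - \<tau>) * v - I * y)) + d2 * (ep - b * ((1 - \<tau> - (1 - I)) * v + (1 - I) * y))
      - \<Phi> (em, ep) + \<Phi> (y, y)"
    unfolding score_L_def S_minus_def S_plus_def prod.case d I(1) I_def[symmetric]
      a_def[symmetric] b_def[symmetric]
    by simp
  also have "\<dots> = (\<tau> - I) * (g y + a * d1 * y - b * d2 * y - (g v + a * d1 * v - b * d2 * v))
      + (\<Phi> (y, y) - \<Phi> (em, ep) - (d1 * (y - em) + d2 * (y - ep)))
      + (d1 * y * (1 - a * \<tau>) + d2 * y * (1 - b * (1 - \<tau>)))"
    by (simp add: algebra_simps)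
  also have "\<dots> = gpl_score \<tau> (G_fun \<tau> g d\<Phi> (em, ep)) v y + bregman_div \<Phi> d\<Phi> (em, ep) (y, y)"
    unfolding gpl_score_def bregman_div_def G_fun_def d I(2) a_def[symmetric] b_def[symmetric]
    using \<open>a * \<tau> = 1\<close> \<open>b * (1 - \<tau>) = 1\<close> by simp
  finally show ?thesis .
qed

lemma score_L_diagonal:
  assumes "\<tau> \<noteq> 0" "\<tau> \<noteq> 1"
  shows "score_L \<tau> g \<Phi> d\<Phi> y (y, y, y) = 0"
  using assms by (simp add: score_L_eq_gpl_score_bregman_div gpl_score_def)

lemma score_L_nonneg:
  assumes "0 < \<tau>" "\<tau> < 1" and sg: "is_subgradient_on (Y \<times> Y) \<Phi> d\<Phi>"
    and mono: "mono_on Y (G_fun \<tau> g d\<Phi> (em, ep))"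
    and "y \<in> Y" "em \<in> Y" "v \<in> Y" "ep \<in> Y"
  shows "0 \<le> score_L \<tau> g \<Phi> d\<Phi> y (em, v, ep)"
  using assms gpl_score_nonneg[OF _ _ mono, of \<tau> y v] bregman_div_nonneg[OF sg, of "(em, ep)" "(y, y)"]
  by (simp add: score_L_eq_gpl_score_bregman_div)

section \<open>Expected generalised piecewise linear scores are minimal at quantiles\<close>

context real_distribution
begin

lemma integrable_gpl_score:
  assumes "integrable M G"
  shows "integrable M (gpl_score \<tau> G v)"
proof -
  have "integrable M (\<lambda>y. \<tau> * (G y - G v) - indicator {..v} y *\<^sub>R (G y - G v))"
    using assms by (intro Bochner_Integration.integrable_diff integrable_mult_right integrable_mult_indicator) auto
  then show ?thesis
    unfolding gpl_score_def by (simp add: left_diff_distrib)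
qed

lemma integrable_indicator_diff_mult:
  fixes f :: "real \<Rightarrow> real"
  assumes "integrable M f" "A \<in> sets borel" "B \<in> sets borel"
  shows "integrable M (\<lambda>y. (indicator A y - indicator B y) * f y)"
proof -
  have "integrable M (\<lambda>y. indicator A y *\<^sub>R f y - indicator B y *\<^sub>R f y)"
    using integrable_mult_indicator[of A M f] integrable_mult_indicator[of B M f] assms by simp
  then show ?thesis
    by (simp add: left_diff_distrib)
qed

lemma integral_gpl_score_diff:
  assumes G: "integrable M G" and A: "A \<in> sets borel"
    and A_q: "\<And>y. (indicator {..q} y - indicator A y) * (G y - G q) = 0"
  shows "(\<integral>y. gpl_score \<tau> G v y \<partial>M) - (\<integral>y. gpl_score \<tau> G q y \<partial>M)
    = (\<integral>y. (indicator A y - indicator {..v} y) * (G y - G v) \<partial>M) + (measure M A - \<tau>) * (G v - G q)"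
proof -
  define h where "h = (\<lambda>y. (indicator A y - indicator {..v} y) * (G y - G v))"
  have pointwise: "gpl_score \<tau> G v y - gpl_score \<tau> G q y = h y + (G v - G q) * (indicator A y - \<tau>)" for y
    using A_q[of y] by (simp add: gpl_score_def h_def algebra_simps)
  have h: "integrable M h"
    unfolding h_def using G A by (intro integrable_indicator_diff_mult) auto
  have "(\<integral>y. gpl_score \<tau> G v y \<partial>M) - (\<integral>y. gpl_score \<tau> G q y \<partial>M)
      = (\<integral>y. h y + (G v - G q) * (indicator A y - \<tau>) \<partial>M)"
    using integrable_gpl_score[OF G] by (simp flip: pointwise)
  also have "\<dots> = integral\<^sup>L M h + (G v - G q) * (measure M A - \<tau>)"
  proof -
    have "integrable M (indicator A :: real \<Rightarrow> real)"
      using A by (simp add: emeasure_finite less_top[symmetric])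
    then show ?thesis
      using h prob_space by simp
  qed
  finally show ?thesis
    by (simp add: h_def)
qed

lemma quantile_set_null_gap_right:
  assumes "q < v" "cdf M q = \<tau>" "{q<..<v} \<in> null_sets M"
  shows "v \<in> quantile_set \<tau> M"
proof -
  have "measure M ({..q} \<union> {q<..<v}) = cdf M q"
    using assms(3) by (simp add: measure_Un_null_set cdf_def)
  moreover have "{..q} \<union> {q<..<v} = {..<v}"
    using \<open>q < v\<close> by auto
  ultimately show ?thesis
    using cdf_nondecreasing[of q v] assms(1,2) by (simp add: quantile_set_def)
qed

lemma quantile_set_null_gap_left:
  assumes "v < q" "measure M {..<q} = \<tau>" "{v<..<q} \<in> null_sets M"
  shows "v \<in> quantile_set \<tau> M"
proof -
  have "measure M ({..v} \<union> {v<..<q}) = cdf M v"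
    using assms(3) by (simp add: measure_Un_null_set cdf_def)
  moreover have "{..v} \<union> {v<..<q} = {..<q}"
    using \<open>v < q\<close> by auto
  moreover have "measure M {..<v} \<le> measure M {..<q}"
    using \<open>v < q\<close> by (intro finite_measure_mono) auto
  ultimately show ?thesis
    using assms(2) by (simp add: quantile_set_def)
qed

lemma integral_gpl_score_quantile_le_right:
  assumes q: "q \<in> quantile_set \<tau> M" and "q \<le> v"
    and AEY: "AE y in M. y \<in> Y" and qY: "q \<in> Y" and vY: "v \<in> Y"
    and G: "integrable M G" "mono_on Y G"
  shows "(\<integral>y. gpl_score \<tau> G q y \<partial>M) \<le> (\<integral>y. gpl_score \<tau> G v y \<partial>M)"
    and "strict_mono_on Y G \<Longrightarrow> (\<integral>y. gpl_score \<tau> G v y \<partial>M) = (\<integral>y. gpl_score \<tau> G q y \<partial>M)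
      \<Longrightarrow> v \<in> quantile_set \<tau> M"
proof -
  define h where "h = (\<lambda>y. (indicator {..q} y - indicator {..v} y) * (G y - G v))"
  have diff: "(\<integral>y. gpl_score \<tau> G v y \<partial>M) - (\<integral>y. gpl_score \<tau> G q y \<partial>M)
      = integral\<^sup>L M h + (cdf M q - \<tau>) * (G v - G q)"
    unfolding h_def cdf_def by (rule integral_gpl_score_diff[OF G(1)]) auto
  have h_int: "integrable M h"
    unfolding h_def using G(1) by (intro integrable_indicator_diff_mult) auto
  have h_nonneg: "AE y in M. 0 \<le> h y"
    using AEY
  proof eventually_elim
    case (elim y)
    then show ?case
      using \<open>q \<le> v\<close> mono_onD[OF G(2) elim vY] by (auto simp: h_def indicator_def)
  qed
  have jump_nonneg: "0 \<le> (cdf M q - \<tau>) * (G v - G q)"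
    using q mono_onD[OF G(2) qY vY \<open>q \<le> v\<close>] by (simp add: quantile_set_def)
  then show "(\<integral>y. gpl_score \<tau> G q y \<partial>M) \<le> (\<integral>y. gpl_score \<tau> G v y \<partial>M)"
    using diff integral_nonneg_AE[OF h_nonneg] by linarith
  assume sm: "strict_mono_on Y G"
    and eq: "(\<integral>y. gpl_score \<tau> G v y \<partial>M) = (\<integral>y. gpl_score \<tau> G q y \<partial>M)"
  show "v \<in> quantile_set \<tau> M"
  proof (cases "q = v")
    case True
    then show ?thesis using q by simp
  next
    case False
    then have "q < v" using \<open>q \<le> v\<close> by simp
    have "integral\<^sup>L M h = 0" and "(cdf M q - \<tau>) * (G v - G q) = 0"
      using diff eq integral_nonneg_AE[OF h_nonneg] jump_nonneg by linarith+
    moreover have "G q < G v"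
      using strict_mono_onD[OF sm qY vY \<open>q < v\<close>] .
    ultimately have "cdf M q = \<tau>"
      by simp
    have "AE y in M. y \<in> {q<..<v} \<longrightarrow> 0 < h y"
      using AEY
    proof eventually_elim
      case (elim y)
      then show ?case
        using strict_mono_onD[OF sm elim vY] by (auto simp: h_def)
    qed
    then have "{q<..<v} \<in> null_sets M"
      using null_sets_of_integral_nonneg_eq_0[OF h_int h_nonneg \<open>integral\<^sup>L M h = 0\<close>] by simp
    then show ?thesis
      using quantile_set_null_gap_right[OF \<open>q < v\<close>] \<open>cdf M q = \<tau>\<close> q by blast
  qed
qed

lemma integral_gpl_score_quantile_le_left:
  assumes q: "q \<in> quantile_set \<tau> M" and "v < q"
    and AEY: "AE y in M. y \<in> Y" and qY: "q \<in> Y" and vY: "v \<in> Y"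
    and G: "integrable M G" "mono_on Y G"
  shows "(\<integral>y. gpl_score \<tau> G q y \<partial>M) \<le> (\<integral>y. gpl_score \<tau> G v y \<partial>M)"
    and "strict_mono_on Y G \<Longrightarrow> (\<integral>y. gpl_score \<tau> G v y \<partial>M) = (\<integral>y. gpl_score \<tau> G q y \<partial>M)
      \<Longrightarrow> v \<in> quantile_set \<tau> M"
proof -
  define h where "h = (\<lambda>y. (indicator {..<q} y - indicator {..v} y) * (G y - G v))"
  have diff: "(\<integral>y. gpl_score \<tau> G v y \<partial>M) - (\<integral>y. gpl_score \<tau> G q y \<partial>M)
      = integral\<^sup>L M h + (measure M {..<q} - \<tau>) * (G v - G q)"
    unfolding h_def by (rule integral_gpl_score_diff[OF G(1)]) (auto simp: indicator_def)
  have h_int: "integrable M h"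
    unfolding h_def using G(1) by (intro integrable_indicator_diff_mult) auto
  have h_nonneg: "AE y in M. 0 \<le> h y"
    using AEY
  proof eventually_elim
    case (elim y)
    then show ?case
      using \<open>v < q\<close> mono_onD[OF G(2) vY elim] by (auto simp: h_def indicator_def)
  qed
  have jump_nonneg: "0 \<le> (measure M {..<q} - \<tau>) * (G v - G q)"
    using q mono_onD[OF G(2) vY qY] \<open>v < q\<close> by (intro mult_nonpos_nonpos) (auto simp: quantile_set_def)
  then show "(\<integral>y. gpl_score \<tau> G q y \<partial>M) \<le> (\<integral>y. gpl_score \<tau> G v y \<partial>M)"
    using diff integral_nonneg_AE[OF h_nonneg] by linarith
  assume sm: "strict_mono_on Y G"
    and eq: "(\<integral>y. gpl_score \<tau> G v y \<partial>M) = (\<integral>y. gpl_score \<tau> G q y \<partial>M)"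
  have "integral\<^sup>L M h = 0" and "(measure M {..<q} - \<tau>) * (G v - G q) = 0"
    using diff eq integral_nonneg_AE[OF h_nonneg] jump_nonneg by linarith+
  moreover have "G v < G q"
    using strict_mono_onD[OF sm vY qY \<open>v < q\<close>] .
  ultimately have "measure M {..<q} = \<tau>"
    by simp
  have "AE y in M. y \<in> {v<..<q} \<longrightarrow> 0 < h y"
    using AEY
  proof eventually_elim
    case (elim y)
    then show ?case
      using strict_mono_onD[OF sm vY elim] by (auto simp: h_def)
  qed
  then have "{v<..<q} \<in> null_sets M"
    using null_sets_of_integral_nonneg_eq_0[OF h_int h_nonneg \<open>integral\<^sup>L M h = 0\<close>] by simp
  then show "v \<in> quantile_set \<tau> M"
    using quantile_set_null_gap_left[OF \<open>v < q\<close>] \<open>measure M {..<q} = \<tau>\<close> by blast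
qed

lemma integral_gpl_score_minimal_at_quantile:
  assumes "q \<in> quantile_set \<tau> M" "AE y in M. y \<in> Y" "q \<in> Y" "v \<in> Y"
    and "integrable M G" "mono_on Y G"
  shows "(\<integral>y. gpl_score \<tau> G q y \<partial>M) \<le> (\<integral>y. gpl_score \<tau> G v y \<partial>M)"
  using integral_gpl_score_quantile_le_right(1)[OF assms(1) _ assms(2-6)]
    integral_gpl_score_quantile_le_left(1)[OF assms(1) _ assms(2-6)]
  by (cases "q \<le> v") auto

lemma quantile_if_integral_gpl_score_eq:
  assumes "q \<in> quantile_set \<tau> M" "AE y in M. y \<in> Y" "q \<in> Y" "v \<in> Y"
    and "integrable M G" "strict_mono_on Y G"
    and "(\<integral>y. gpl_score \<tau> G v y \<partial>M) = (\<integral>y. gpl_score \<tau> G q y \<partial>M)"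
  shows "v \<in> quantile_set \<tau> M"
  using integral_gpl_score_quantile_le_right(2)[OF assms(1) _ assms(2-5) _ assms(6,7)]
    integral_gpl_score_quantile_le_left(2)[OF assms(1) _ assms(2-5) _ assms(6,7)]
    strict_mono_on_imp_mono_on[OF assms(6)]
  by (cases "q \<le> v") auto

lemma quantile_set_subset_interval:
  assumes "0 < \<tau>" "\<tau> < 1" and Y: "is_interval Y" and AEY: "AE y in M. y \<in> Y"
  shows "quantile_set \<tau> M \<subseteq> Y"
proof
  fix q
  assume q: "q \<in> quantile_set \<tau> M"
  show "q \<in> Y"
  proof (rule ccontr)
    assume "q \<notin> Y"
    from is_interval_not_mem_cases[OF Y this] show False
    proof
      assume "\<forall>y\<in>Y. y < q"
      with AEY have "AE y in M. y \<in> {..<q}"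
        by (auto elim!: eventually_mono)
      then have "measure M {..<q} = 1"
        by (simp add: prob_eq_1)
      then show False
        using q \<open>\<tau> < 1\<close> by (simp add: quantile_set_def)
    next
      assume "\<forall>y\<in>Y. q < y"
      with AEY have "AE y in M. y \<notin> {..q}"
        by (auto elim!: eventually_mono)
      then have "{..q} \<in> null_sets M"
        using AE_iff_null_sets[of "{..q}" M] by simp
      then have "cdf M q = 0"
        by (simp add: cdf_def measure_def null_setsD1)
      then show False
        using q \<open>0 < \<tau>\<close> by (simp add: quantile_set_def)
    qed
  qed
qed

end

section \<open>Expected shortfalls via the quantile transform\<close>

context cdf_distribution
begin

lemma quantile_fun_eq_I: "quantile_fun M = I"
  by (simp add: fun_eq_iff quantile_fun_def)

lemma measurable_I_restrict_lborel: "I \<in> borel_measurable (restrict_space lborel {0<..<1})"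
  using measurable_CI by (simp add: measurable_def space_restrict_space sets_restrict_space)

lemma quantile_transform:
  fixes f :: "real \<Rightarrow> real"
  assumes f: "integrable M f"
  shows "set_integrable lborel {0<..<1} (\<lambda>p. f (I p))"
    and "(\<integral>y. f y \<partial>M) = (LINT p:{0<..<1}|lborel. f (I p))"
proof -
  have f_meas: "f \<in> borel_measurable borel"
    using borel_measurable_integrable[OF f] by (simp add: measurable_def)
  have "integrable (distr (restrict_space lborel {0<..<1}) borel I) f"
    using f distr_I_eq_M by simp
  then have "integrable (restrict_space lborel {0<..<1}) (\<lambda>p. f (I p))"
    using integrable_distr_eq[OF measurable_I_restrict_lborel f_meas] by simp
  then show "set_integrable lborel {0<..<1} (\<lambda>p. f (I p))"
    by (simp add: set_integrable_def integrable_restrict_space)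
  have "(\<integral>y. f y \<partial>M) = (\<integral>y. f y \<partial>distr (restrict_space lborel {0<..<1}) borel I)"
    using distr_I_eq_M by simp
  also have "\<dots> = (\<integral>p. f (I p) \<partial>restrict_space lborel {0<..<1})"
    by (rule integral_distr[OF measurable_I_restrict_lborel f_meas])
  finally show "(\<integral>y. f y \<partial>M) = (LINT p:{0<..<1}|lborel. f (I p))"
    by (simp add: set_lebesgue_integral_def integral_restrict_space)
qed

lemma AE_quantile_transform:
  assumes "AE y in M. y \<in> Y" "Y \<in> sets borel"
  shows "AE p in lborel. p \<in> {0<..<1} \<longrightarrow> I p \<in> Y"
proof -
  have "AE y in distr (restrict_space lborel {0<..<1}) borel I. y \<in> Y"
    unfolding distr_I_eq_M by (rule assms(1))
  then have "AE p in restrict_space lborel {0<..<1}. I p \<in> Y"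
    using AE_distr_iff[OF measurable_I_restrict_lborel, of "\<lambda>y. y \<in> Y"] assms(2) by simp
  then show ?thesis
    by (simp add: AE_restrict_space_iff)
qed

lemma quantile_fun_le_quantile:
  assumes "q \<in> quantile_set \<tau> M" "0 < p" "p \<le> \<tau>" "\<tau> < 1"
  shows "I p \<le> q"
  using assms pseudoinverse[of p q] by (simp add: quantile_set_def)

lemma quantile_le_quantile_fun:
  assumes q: "q \<in> quantile_set \<tau> M" and "0 \<le> \<tau>" "\<tau> < p" "p < 1"
  shows "q \<le> I p"
proof (rule ccontr)
  assume "\<not> q \<le> I p"
  have "p \<le> C (I p)"
    using pseudoinverse[of p "I p"] assms by simp
  also have "\<dots> \<le> measure M {..<q}"
    using \<open>\<not> q \<le> I p\<close> by (subst cdf_def2[of M "I p"]) (intro finite_measure_mono, auto)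
  also have "\<dots> \<le> \<tau>"
    using q by (simp add: quantile_set_def)
  finally show False
    using \<open>\<tau> < p\<close> by simp
qed

lemma borel_measurable_quantile_transform:
  fixes f :: "real \<Rightarrow> real"
  assumes "f \<in> borel_measurable borel"
  shows "(\<lambda>p. indicator {0<..<1} p * f (I p)) \<in> borel_measurable lborel"
proof -
  have "(\<lambda>p. f (I p)) \<in> borel_measurable (restrict_space lborel {0<..<1})"
    using measurable_compose[OF measurable_I_restrict_lborel assms] .
  then show ?thesis
    by (subst (asm) borel_measurable_restrict_space_iff) auto
qed

text \<open>The tails \<open>S\<close> of \<open>(0, 1)\<close> and \<open>A\<close> of the distribution need only correspond where \<open>f\<close> does
  not vanish; this absorbs the atom at a quantile.\<close>

lemma set_integral_quantile_fun_tail: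
  fixes f :: "real \<Rightarrow> real"
  assumes f: "integrable M f" and A: "A \<in> sets borel" and S: "S \<in> sets borel" "S \<subseteq> {0<..<1}"
    and tail: "AE p in lborel. p \<in> {0<..<1} \<longrightarrow> f (I p) = 0 \<or> (p \<in> S \<longleftrightarrow> I p \<in> A)"
  shows "set_integrable lborel S (\<lambda>p. f (I p))"
    and "(LINT p:S|lborel. f (I p)) = (\<integral>y. indicator A y * f y \<partial>M)"
proof -
  have "integrable M (\<lambda>y. indicator A y * f y)"
    using integrable_mult_indicator[of A M f] f A by simp
  note transform = quantile_transform[OF this]
  have int: "integrable lborel (\<lambda>p. indicator {0<..<1} p * (indicator A (I p) * f (I p)))"
    using transform(1) by (simp add: set_integrable_def)
  have eq: "AE p in lborel. indicator {0<..<1} p * (indicator A (I p) * f (I p)) = indicator S p * f (I p)"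
    using tail by eventually_elim (use S(2) in \<open>auto simp: indicator_def\<close>)
  have f_meas: "f \<in> borel_measurable borel"
    using borel_measurable_integrable[OF f] by (simp add: measurable_def)
  have "(\<lambda>p. indicator S p * (indicator {0<..<1} p * f (I p))) \<in> borel_measurable lborel"
    using borel_measurable_times[OF borel_measurable_indicator[of S lborel]
        borel_measurable_quantile_transform[OF f_meas]] S(1)
    by simp
  moreover have "indicator S p * (indicator {0<..<1} p * f (I p)) = indicator S p * f (I p)" for p
    using S(2) by (auto simp: indicator_def)
  ultimately have meas: "(\<lambda>p. indicator S p * f (I p)) \<in> borel_measurable lborel"
    by simp
  show "set_integrable lborel S (\<lambda>p. f (I p))"
    unfolding set_integrable_def using integrable_cong_AE_imp[OF int meas eq] by simp
  have "(LINT p:S|lborel. f (I p)) = (LINT p:{0<..<1}|lborel. indicator A (I p) * f (I p))"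
    unfolding set_lebesgue_integral_def
    using integral_cong_AE[OF borel_measurable_integrable[OF int] meas eq] by simp
  then show "(LINT p:S|lborel. f (I p)) = (\<integral>y. indicator A y * f y \<partial>M)"
    using transform(2) by simp
qed

lemma ES_lower_eq:
  assumes "0 < \<tau>" "\<tau> < 1" and q: "q \<in> quantile_set \<tau> M" and Y: "integrable M (\<lambda>y. y)"
  shows "\<tau> * (ES_lower \<tau> M - q) = (\<integral>y. indicator {..q} y * (y - q) \<partial>M)"
proof -
  have "AE p in lborel. p \<in> {0<..<1} \<longrightarrow> I p - q = 0 \<or> (p \<in> {0<..<\<tau>} \<longleftrightarrow> I p \<in> {..q})"
    using AE_lborel_singleton[of \<tau>]
  proof eventually_elim
    case (elim p)
    then show ?case
      using quantile_fun_le_quantile[OF q, of p] quantile_le_quantile_fun[OF q, of p] assms(1,2)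
      by (cases "p < \<tau>") auto
  qed
  moreover have "integrable M (\<lambda>y. y - q)" "{0<..<\<tau>} \<subseteq> {0<..<1}"
    using Y assms(2) by auto
  ultimately have tail: "set_integrable lborel {0<..<\<tau>} (\<lambda>p. I p - q)"
      "(LINT p:{0<..<\<tau>}|lborel. I p - q) = (\<integral>y. indicator {..q} y * (y - q) \<partial>M)"
    using set_integral_quantile_fun_tail[of "\<lambda>y. y - q" "{..q}" "{0<..<\<tau>}"] by auto
  have const: "set_integrable lborel {0<..<\<tau>} (\<lambda>_. q)"
    using integrable_real_indicator[of "{0<..<\<tau>}" lborel] assms(1) by (simp add: set_integrable_def)
  have "set_integrable lborel {0<..<\<tau>} I"
    using set_integral_add(1)[OF tail(1) const] by simp
  then have "\<tau> * (ES_lower \<tau> M - q) = (LINT p:{0<..<\<tau>}|lborel. I p - q)"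
    using assms(1) const by (simp add: ES_lower_def quantile_fun_eq_I right_diff_distrib set_integral_const)
  then show ?thesis
    using tail(2) by simp
qed

lemma ES_upper_eq:
  assumes "0 < \<tau>" "\<tau> < 1" and q: "q \<in> quantile_set \<tau> M" and Y: "integrable M (\<lambda>y. y)"
  shows "(1 - \<tau>) * (ES_upper \<tau> M - q) = (\<integral>y. indicator {q<..} y * (y - q) \<partial>M)"
proof -
  have "AE p in lborel. p \<in> {0<..<1} \<longrightarrow> I p - q = 0 \<or> (p \<in> {\<tau><..<1} \<longleftrightarrow> I p \<in> {q<..})"
    using AE_lborel_singleton[of \<tau>]
  proof eventually_elim
    case (elim p)
    then show ?case
      using quantile_fun_le_quantile[OF q, of p] quantile_le_quantile_fun[OF q, of p] assms(1,2)
      by (cases "p < \<tau>") auto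
  qed
  moreover have "integrable M (\<lambda>y. y - q)" "{\<tau><..<1} \<subseteq> {0<..<1}"
    using Y assms(1) by auto
  ultimately have tail: "set_integrable lborel {\<tau><..<1} (\<lambda>p. I p - q)"
      "(LINT p:{\<tau><..<1}|lborel. I p - q) = (\<integral>y. indicator {q<..} y * (y - q) \<partial>M)"
    using set_integral_quantile_fun_tail[of "\<lambda>y. y - q" "{q<..}" "{\<tau><..<1}"] by auto
  have const: "set_integrable lborel {\<tau><..<1} (\<lambda>_. q)"
    using integrable_real_indicator[of "{\<tau><..<1}" lborel] assms(2) by (simp add: set_integrable_def)
  have "set_integrable lborel {\<tau><..<1} I"
    using set_integral_add(1)[OF tail(1) const] by simp
  then have "(1 - \<tau>) * (ES_upper \<tau> M - q) = (LINT p:{\<tau><..<1}|lborel. I p - q)"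
    using assms(2) const by (simp add: ES_upper_def quantile_fun_eq_I right_diff_distrib set_integral_const)
  then show ?thesis
    using tail(2) by simp
qed

lemma integral_gpl_score_id_at_quantile:
  assumes "0 < \<tau>" "\<tau> < 1" "q \<in> quantile_set \<tau> M" and Y: "integrable M (\<lambda>y. y)"
  shows "(\<integral>y. gpl_score \<tau> (\<lambda>y. y) q y \<partial>M) = \<tau> * ((\<integral>y. y \<partial>M) - ES_lower \<tau> M)"
    and "(\<integral>y. gpl_score \<tau> (\<lambda>y. y) q y \<partial>M) = (1 - \<tau>) * (ES_upper \<tau> M - (\<integral>y. y \<partial>M))"
proof -
  have ind_int: "integrable M (\<lambda>y. indicator A y * (y - q))" if "A \<in> sets borel" for A
    using integrable_mult_indicator[of A M "\<lambda>y. y - q"] that Y by simp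
  have mean: "(\<integral>y. c * (y - q) \<partial>M) = c * ((\<integral>y. y \<partial>M) - q)" for c
    using Y prob_space by simp
  have "gpl_score \<tau> (\<lambda>y. y) q y = \<tau> * (y - q) - indicator {..q} y * (y - q)" for y
    by (simp add: gpl_score_def algebra_simps)
  then have "(\<integral>y. gpl_score \<tau> (\<lambda>y. y) q y \<partial>M)
      = (\<integral>y. \<tau> * (y - q) \<partial>M) - (\<integral>y. indicator {..q} y * (y - q) \<partial>M)"
    using ind_int Y by simp
  then show "(\<integral>y. gpl_score \<tau> (\<lambda>y. y) q y \<partial>M) = \<tau> * ((\<integral>y. y \<partial>M) - ES_lower \<tau> M)"
    unfolding mean ES_lower_eq[OF assms, symmetric] by (simp add: algebra_simps)
  have "gpl_score \<tau> (\<lambda>y. y) q y = (\<tau> - 1) * (y - q) + indicator {q<..} y * (y - q)" for y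
    by (simp add: gpl_score_def algebra_simps indicator_def)
  then have "(\<integral>y. gpl_score \<tau> (\<lambda>y. y) q y \<partial>M)
      = (\<integral>y. (\<tau> - 1) * (y - q) \<partial>M) + (\<integral>y. indicator {q<..} y * (y - q) \<partial>M)"
    using ind_int Y by simp
  then show "(\<integral>y. gpl_score \<tau> (\<lambda>y. y) q y \<partial>M) = (1 - \<tau>) * (ES_upper \<tau> M - (\<integral>y. y \<partial>M))"
    unfolding mean ES_upper_eq[OF assms, symmetric] by (simp add: algebra_simps)
qed

lemma set_integral_quantile_fun_average_mem:
  assumes "0 \<le> a" "a < b" "b \<le> 1" and Y: "is_interval Y" "AE y in M. y \<in> Y"
    and int: "integrable M (\<lambda>y. y)"
  shows "(LINT p:{a<..<b}|lborel. I p) / (b - a) \<in> Y"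
proof -
  have "set_integrable lborel {a<..<b} I"
    by (rule set_integrable_subset[OF quantile_transform(1)[OF int]]) (use assms(1,3) in auto)
  moreover have "AE p in lborel. p \<in> {a<..<b} \<longrightarrow> I p \<in> Y"
    using AE_quantile_transform[OF Y(2) real_interval_borel_measurable[OF Y(1)]] assms(1,3)
    by (auto elim!: eventually_mono)
  ultimately show ?thesis
    using set_integral_average_mem_interval[OF Y(1), of "{a<..<b}" lborel I] assms(1,2) by simp
qed

lemma ES_mem_interval:
  assumes "0 < \<tau>" "\<tau> < 1" "is_interval Y" "AE y in M. y \<in> Y" "integrable M (\<lambda>y. y)"
  shows "ES_lower \<tau> M \<in> Y" and "ES_upper \<tau> M \<in> Y"
  using set_integral_quantile_fun_average_mem[of 0 \<tau> Y] set_integral_quantile_fun_average_mem[of \<tau> 1 Y] assms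
  by (simp_all add: ES_lower_def ES_upper_def quantile_fun_eq_I)

section \<open>The expected score\<close>

lemma integral_bregman_div_diagonal:
  fixes \<Phi> :: "real \<times> real \<Rightarrow> real"
  assumes "integrable M (\<lambda>y. y)" "integrable M (\<lambda>y. \<Phi> (y, y))"
  shows "integrable M (\<lambda>y. bregman_div \<Phi> d\<Phi> e (y, y))"
    and "(\<integral>y. bregman_div \<Phi> d\<Phi> e (y, y) \<partial>M)
      = (\<integral>y. \<Phi> (y, y) \<partial>M) - \<Phi> e - d\<Phi> e \<bullet> ((\<integral>y. y \<partial>M, \<integral>y. y \<partial>M) - e)"
proof -
  have eq: "bregman_div \<Phi> d\<Phi> e (y, y)
      = \<Phi> (y, y) - \<Phi> e - (fst (d\<Phi> e) * (y - fst e) + snd (d\<Phi> e) * (y - snd e))" for y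
    by (simp add: bregman_div_def inner_prod_def)
  show "integrable M (\<lambda>y. bregman_div \<Phi> d\<Phi> e (y, y))"
    unfolding eq using assms by simp
  show "(\<integral>y. bregman_div \<Phi> d\<Phi> e (y, y) \<partial>M)
      = (\<integral>y. \<Phi> (y, y) \<partial>M) - \<Phi> e - d\<Phi> e \<bullet> ((\<integral>y. y \<partial>M, \<integral>y. y \<partial>M) - e)"
    unfolding eq using assms prob_space by (simp add: inner_prod_def algebra_simps)
qed

lemma integrable_score_L:
  assumes "0 < \<tau>" "\<tau> < 1" "integrable M (\<lambda>y. y)" "integrable M g" "integrable M (\<lambda>y. \<Phi> (y, y))"
  shows "integrable M (\<lambda>y. score_L \<tau> g \<Phi> d\<Phi> y a)"
  using integrable_gpl_score[OF integrable_G_fun[OF assms(4,3)]]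
    integral_bregman_div_diagonal(1)[OF assms(3,5)] assms(1,2)
  by (cases a) (simp add: score_L_eq_gpl_score_bregman_div)

lemma integral_score_L:
  assumes \<tau>: "0 < \<tau>" "\<tau> < 1" and q: "q \<in> quantile_set \<tau> M" and Y: "integrable M (\<lambda>y. y)"
    and g: "integrable M g" and \<Phi>: "integrable M (\<lambda>y. \<Phi> (y, y))"
  shows "(\<integral>y. score_L \<tau> g \<Phi> d\<Phi> y (em, v, ep) \<partial>M)
      = (\<integral>y. gpl_score \<tau> (G_fun \<tau> g d\<Phi> (em, ep)) v y \<partial>M)
        - (\<integral>y. gpl_score \<tau> (G_fun \<tau> g d\<Phi> (em, ep)) q y \<partial>M)
        + bregman_div \<Phi> d\<Phi> (em, ep) (ES_lower \<tau> M, ES_upper \<tau> M)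
        + ((\<integral>y. gpl_score \<tau> g q y \<partial>M) + (\<integral>y. \<Phi> (y, y) \<partial>M) - \<Phi> (ES_lower \<tau> M, ES_upper \<tau> M))"
proof -
  obtain d1 d2 where d: "d\<Phi> (em, ep) = (d1, d2)" by fastforce
  define c where "c = d1 / \<tau> - d2 / (1 - \<tau>)"
  define G where "G = G_fun \<tau> g d\<Phi> (em, ep)"
  have G_eq: "G = (\<lambda>y. g y + c * y)"
    by (simp add: G_def G_fun_eq d c_def)
  have G_int: "integrable M G"
    unfolding G_def using g Y by (rule integrable_G_fun)
  have score_eq: "score_L \<tau> g \<Phi> d\<Phi> y (em, v, ep) = gpl_score \<tau> G v y + bregman_div \<Phi> d\<Phi> (em, ep) (y, y)" for y
    unfolding G_def using \<tau> by (simp add: score_L_eq_gpl_score_bregman_div)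
  note bregman = integral_bregman_div_diagonal[OF Y \<Phi>, of d\<Phi> "(em, ep)"]
  have "(\<integral>y. gpl_score \<tau> G q y \<partial>M)
      = (\<integral>y. gpl_score \<tau> g q y \<partial>M) + c * (\<integral>y. gpl_score \<tau> (\<lambda>y. y) q y \<partial>M)"
    unfolding G_eq gpl_score_add_linear
    using integrable_gpl_score[OF g] integrable_gpl_score[OF Y] by simp
  also have "c * (\<integral>y. gpl_score \<tau> (\<lambda>y. y) q y \<partial>M)
      = d1 * ((\<integral>y. y \<partial>M) - ES_lower \<tau> M) - d2 * (ES_upper \<tau> M - (\<integral>y. y \<partial>M))"
  proof -
    note id_score = integral_gpl_score_id_at_quantile[OF \<tau> q Y]
    have "d1 / \<tau> * (\<integral>y. gpl_score \<tau> (\<lambda>y. y) q y \<partial>M) = d1 * ((\<integral>y. y \<partial>M) - ES_lower \<tau> M)"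
      unfolding id_score(1) using \<tau> by simp
    moreover have "d2 / (1 - \<tau>) * (\<integral>y. gpl_score \<tau> (\<lambda>y. y) q y \<partial>M) = d2 * (ES_upper \<tau> M - (\<integral>y. y \<partial>M))"
      unfolding id_score(2) using \<tau> by simp
    ultimately show ?thesis
      by (simp add: c_def left_diff_distrib)
  qed
  finally have gpl_q: "(\<integral>y. gpl_score \<tau> G q y \<partial>M) = (\<integral>y. gpl_score \<tau> g q y \<partial>M)
      + (d1 * ((\<integral>y. y \<partial>M) - ES_lower \<tau> M) - d2 * (ES_upper \<tau> M - (\<integral>y. y \<partial>M)))" .
  have "(\<integral>y. score_L \<tau> g \<Phi> d\<Phi> y (em, v, ep) \<partial>M)
      = (\<integral>y. gpl_score \<tau> G v y \<partial>M) + (\<integral>y. bregman_div \<Phi> d\<Phi> (em, ep) (y, y) \<partial>M)"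
    unfolding score_eq using integrable_gpl_score[OF G_int] bregman(1) by simp
  then show ?thesis
    unfolding bregman(2) G_def[symmetric] gpl_q
      bregman_div_def[of \<Phi> d\<Phi> "(em, ep)" "(ES_lower \<tau> M, ES_upper \<tau> M)"]
    by (simp add: inner_prod_def d algebra_simps)
qed

lemma integral_score_L_decomposition:
  assumes "0 < \<tau>" "\<tau> < 1" "q \<in> quantile_set \<tau> M" "integrable M (\<lambda>y. y)"
    and "integrable M g" "integrable M (\<lambda>y. \<Phi> (y, y))"
  shows "(\<integral>y. score_L \<tau> g \<Phi> d\<Phi> y (em, v, ep) \<partial>M)
      = (\<integral>y. score_L \<tau> g \<Phi> d\<Phi> y (ES_lower \<tau> M, q, ES_upper \<tau> M) \<partial>M)
        + ((\<integral>y. gpl_score \<tau> (G_fun \<tau> g d\<Phi> (em, ep)) v y \<partial>M)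
          - (\<integral>y. gpl_score \<tau> (G_fun \<tau> g d\<Phi> (em, ep)) q y \<partial>M))
        + bregman_div \<Phi> d\<Phi> (em, ep) (ES_lower \<tau> M, ES_upper \<tau> M)"
  using integral_score_L[OF assms, of d\<Phi> em v ep]
    integral_score_L[OF assms, of d\<Phi> "ES_lower \<tau> M" q "ES_upper \<tau> M"]
  by simp

lemma integral_score_L_minimal:
  assumes \<tau>: "0 < \<tau>" "\<tau> < 1" and Y: "is_interval Y" "AE y in M. y \<in> Y"
    and int: "integrable M (\<lambda>y. y)" "integrable M g" "integrable M (\<lambda>y. \<Phi> (y, y))"
    and sg: "is_subgradient_on (Y \<times> Y) \<Phi> d\<Phi>"
    and ah: "ah \<in> composite_triplet \<tau> M" and a: "a \<in> Y \<times> Y \<times> Y"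
    and mono: "\<forall>e\<in>Y \<times> Y. mono_on Y (G_fun \<tau> g d\<Phi> e)"
  shows "(\<integral>y. score_L \<tau> g \<Phi> d\<Phi> y ah \<partial>M) \<le> (\<integral>y. score_L \<tau> g \<Phi> d\<Phi> y a \<partial>M)"
proof -
  obtain q where q: "q \<in> quantile_set \<tau> M" and ah_eq: "ah = (ES_lower \<tau> M, q, ES_upper \<tau> M)"
    using ah by (auto simp: composite_triplet_def)
  obtain em v ep where a_eq: "a = (em, v, ep)" and "em \<in> Y" "v \<in> Y" "ep \<in> Y"
    using a by auto
  have "q \<in> Y"
    using quantile_set_subset_interval[OF \<tau> Y] q by blast
  have "(\<integral>y. gpl_score \<tau> (G_fun \<tau> g d\<Phi> (em, ep)) q y \<partial>M)
      \<le> (\<integral>y. gpl_score \<tau> (G_fun \<tau> g d\<Phi> (em, ep)) v y \<partial>M)"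
    using integral_gpl_score_minimal_at_quantile[OF q Y(2) \<open>q \<in> Y\<close> \<open>v \<in> Y\<close> integrable_G_fun[OF int(2,1)]]
      mono \<open>em \<in> Y\<close> \<open>ep \<in> Y\<close> by simp
  moreover have "0 \<le> bregman_div \<Phi> d\<Phi> (em, ep) (ES_lower \<tau> M, ES_upper \<tau> M)"
    using bregman_div_nonneg[OF sg] ES_mem_interval[OF \<tau> Y int(1)] \<open>em \<in> Y\<close> \<open>ep \<in> Y\<close> by simp
  ultimately show ?thesis
    unfolding ah_eq a_eq using integral_score_L_decomposition[OF \<tau> q int, of d\<Phi> em v ep] by linarith
qed

lemma integral_score_L_eq_imp_composite_triplet:
  assumes \<tau>: "0 < \<tau>" "\<tau> < 1" and Y: "is_interval Y" "AE y in M. y \<in> Y"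
    and int: "integrable M (\<lambda>y. y)" "integrable M g" "integrable M (\<lambda>y. \<Phi> (y, y))"
    and sg: "is_subgradient_on (Y \<times> Y) \<Phi> d\<Phi>"
    and ah: "ah \<in> composite_triplet \<tau> M" and a: "a \<in> Y \<times> Y \<times> Y"
    and strict: "strict_convex_on (Y \<times> Y) \<Phi>" "\<forall>e\<in>Y \<times> Y. strict_mono_on Y (G_fun \<tau> g d\<Phi> e)"
    and eq: "(\<integral>y. score_L \<tau> g \<Phi> d\<Phi> y ah \<partial>M) = (\<integral>y. score_L \<tau> g \<Phi> d\<Phi> y a \<partial>M)"
  shows "a \<in> composite_triplet \<tau> M"
proof -
  obtain q where q: "q \<in> quantile_set \<tau> M" and ah_eq: "ah = (ES_lower \<tau> M, q, ES_upper \<tau> M)"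
    using ah by (auto simp: composite_triplet_def)
  obtain em v ep where a_eq: "a = (em, v, ep)" and "em \<in> Y" "v \<in> Y" "ep \<in> Y"
    using a by auto
  have "q \<in> Y"
    using quantile_set_subset_interval[OF \<tau> Y] q by blast
  have ES: "(ES_lower \<tau> M, ES_upper \<tau> M) \<in> Y \<times> Y"
    using ES_mem_interval[OF \<tau> Y int(1)] by simp
  have G: "integrable M (G_fun \<tau> g d\<Phi> (em, ep))" "strict_mono_on Y (G_fun \<tau> g d\<Phi> (em, ep))"
    using integrable_G_fun[OF int(2,1)] strict(2) \<open>em \<in> Y\<close> \<open>ep \<in> Y\<close> by auto
  have "(\<integral>y. gpl_score \<tau> (G_fun \<tau> g d\<Phi> (em, ep)) q y \<partial>M)
      \<le> (\<integral>y. gpl_score \<tau> (G_fun \<tau> g d\<Phi> (em, ep)) v y \<partial>M)"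
    using integral_gpl_score_minimal_at_quantile[OF q Y(2) \<open>q \<in> Y\<close> \<open>v \<in> Y\<close> G(1)
        strict_mono_on_imp_mono_on[OF G(2)]] .
  moreover have "0 \<le> bregman_div \<Phi> d\<Phi> (em, ep) (ES_lower \<tau> M, ES_upper \<tau> M)"
    using bregman_div_nonneg[OF sg _ ES] \<open>em \<in> Y\<close> \<open>ep \<in> Y\<close> by simp
  ultimately have "(\<integral>y. gpl_score \<tau> (G_fun \<tau> g d\<Phi> (em, ep)) v y \<partial>M)
      = (\<integral>y. gpl_score \<tau> (G_fun \<tau> g d\<Phi> (em, ep)) q y \<partial>M)"
    and "bregman_div \<Phi> d\<Phi> (em, ep) (ES_lower \<tau> M, ES_upper \<tau> M) = 0"
    using eq integral_score_L_decomposition[OF \<tau> q int, of d\<Phi> em v ep]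
    unfolding ah_eq a_eq by linarith+
  then have "v \<in> quantile_set \<tau> M" and "(ES_lower \<tau> M, ES_upper \<tau> M) = (em, ep)"
    using quantile_if_integral_gpl_score_eq[OF q Y(2) \<open>q \<in> Y\<close> \<open>v \<in> Y\<close> G]
      bregman_div_eq_0_imp_eq[OF strict(1) sg _ ES] \<open>em \<in> Y\<close> \<open>ep \<in> Y\<close> by auto
  then show ?thesis
    unfolding a_eq by (auto simp: composite_triplet_def)
qed

end

theorem mainTheorem2:
  fixes \<tau> :: real and Y :: "real set" and Fs :: "real measure set"
    and \<Phi> :: "real \<times> real \<Rightarrow> real" and d\<Phi> :: "real \<times> real \<Rightarrow> real \<times> real"
    and g :: "real \<Rightarrow> real"
  assumes tau: "0 < \<tau>" "\<tau> < 1"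
    and Y_interval: "is_interval Y"
    and Fs_class: "\<And>M. M \<in> Fs \<Longrightarrow> prob_space M \<and> sets M = sets borel
                     \<and> (AE y in M. y \<in> Y) \<and> integrable M (\<lambda>y. y)"
    and subgrad: "is_subgradient_on (Y \<times> Y) \<Phi> d\<Phi>"
    and g_int: "\<And>M. M \<in> Fs \<Longrightarrow> integrable M g"
    and Phi_int: "\<And>M. M \<in> Fs \<Longrightarrow> integrable M (\<lambda>y. \<Phi> (y, y))"
  shows "(convex_on (Y \<times> Y) \<Phi> \<and> (\<forall>e\<in>Y \<times> Y. mono_on Y (G_fun \<tau> g d\<Phi> e)) \<longrightarrow>
            consistent Fs (Y \<times> Y \<times> Y) (score_L \<tau> g \<Phi> d\<Phi>) (composite_triplet \<tau>)
            \<and> (\<forall>y\<in>Y. \<forall>a\<in>Y \<times> Y \<times> Y.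
                 score_L \<tau> g \<Phi> d\<Phi> y a \<ge> score_L \<tau> g \<Phi> d\<Phi> y (y, y, y)
                 \<and> score_L \<tau> g \<Phi> d\<Phi> y (y, y, y) = 0))
       \<and> (strict_convex_on (Y \<times> Y) \<Phi> \<and> (\<forall>e\<in>Y \<times> Y. strict_mono_on Y (G_fun \<tau> g d\<Phi> e)) \<longrightarrow>
            strictly_consistent Fs (Y \<times> Y \<times> Y) (score_L \<tau> g \<Phi> d\<Phi>) (composite_triplet \<tau>))"
proof -
  have M: "cdf_distribution M" "is_interval Y" "AE y in M. y \<in> Y"
    "integrable M (\<lambda>y. y)" "integrable M g" "integrable M (\<lambda>y. \<Phi> (y, y))" if "M \<in> Fs" for M
    using Fs_class[OF that] g_int[OF that] Phi_int[OF that] Y_interval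
    by (simp_all add: cdf_distribution_def real_distribution_def real_distribution_axioms_def)
  note integrable = cdf_distribution.integrable_score_L[OF M(1) tau M(4-6)]
  note minimal = cdf_distribution.integral_score_L_minimal[OF M(1) tau M(2-6) subgrad]
  note identifies = cdf_distribution.integral_score_L_eq_imp_composite_triplet[OF M(1) tau M(2-6) subgrad]
  show ?thesis
  proof (intro conjI impI)
    assume "convex_on (Y \<times> Y) \<Phi> \<and> (\<forall>e\<in>Y \<times> Y. mono_on Y (G_fun \<tau> g d\<Phi> e))"
    then have mono: "\<forall>e\<in>Y \<times> Y. mono_on Y (G_fun \<tau> g d\<Phi> e)"
      by simp
    show "consistent Fs (Y \<times> Y \<times> Y) (score_L \<tau> g \<Phi> d\<Phi>) (composite_triplet \<tau>)"
      unfolding consistent_def using integrable minimal mono by blast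
    show "\<forall>y\<in>Y. \<forall>a\<in>Y \<times> Y \<times> Y. score_L \<tau> g \<Phi> d\<Phi> y a \<ge> score_L \<tau> g \<Phi> d\<Phi> y (y, y, y)
        \<and> score_L \<tau> g \<Phi> d\<Phi> y (y, y, y) = 0"
      using score_L_nonneg[OF tau subgrad] score_L_diagonal tau mono by fastforce
  next
    assume strict: "strict_convex_on (Y \<times> Y) \<Phi> \<and> (\<forall>e\<in>Y \<times> Y. strict_mono_on Y (G_fun \<tau> g d\<Phi> e))"
    then have "\<forall>e\<in>Y \<times> Y. mono_on Y (G_fun \<tau> g d\<Phi> e)"
      by (simp add: strict_mono_on_imp_mono_on)
    then show "strictly_consistent Fs (Y \<times> Y \<times> Y) (score_L \<tau> g \<Phi> d\<Phi>) (composite_triplet \<tau>)"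
      unfolding strictly_consistent_def consistent_def
      using integrable minimal identifies strict by blast
  qed
qed

end
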